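(* Let $f$ be a DNF with $k$ terms and let $y\in\{0,1\}^n$ satisfy $f_{>\tau}$ and not $f_{\le\tau}$ ($\tau=1000k$). Fix any permutation $\pi$ and let $z_0,z_1,\dots$ be the sweep process started at $y$. Let $i$ be such that $(z_i)_a=y_a$ for all $a\in P(y)$, and let $U_i$ be the set of unanimous indices of $\mathcal{T}_f(z_i)$. Then $f(z_i^{\oplus j})=0$ for all $j\in U_i\setminus P(y)$.
   Context: Terms are sets of literals, a DNF is a set of terms; $g_{\le L}$ / $g_{>L}$ are the sub-DNFs of terms of length $\le L$ / $>L$. $\mathcal{T}_f(x)$ is the set of terms of $f$ satisfied by $x$. Protected set $P(y)$: for each term $T\in f$ not satisfied by $y$, take the literal of $T$ with smallest index not satisfied by $y$; $P(y)$ is the set of these indices. Unanimous indices of a set of terms $\mathcal{T}$: all $i$ such that every term of $\mathcal{T}$ contains $x_i$, or every term of $\mathcal{T}$ contains $\overline{x_i}$. $x^{\oplus j}$ is $x$ with bit $j$ flipped. Sweep process: given $y$ with $f(y)=1$ and a permutation $\pi$ listing $[n]$ as $\pi(0),\dots,\pi(n-1)$, $z_0=y$, and $z_{t+1}=z_t^{\oplus\pi(t)}$ if $f(z_t^{\oplus\pi(t)})=1$, else $z_{t+1}=z_t$. *)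

theory Defs
  imports Main
begin

(* A literal is (i, b): b = True means x_i, b = False means the negation of x_i.
   Assignments x \<in> {0,1}^n are functions nat \<Rightarrow> bool (only indices < n matter). *)

type_synonym lit = "nat \<times> bool"
type_synonym dterm = "lit set"
type_synonym dnf = "dterm set"

definition lit_sat :: "(nat \<Rightarrow> bool) \<Rightarrow> lit \<Rightarrow> bool" where
  "lit_sat x l \<longleftrightarrow> x (fst l) = snd l"

definition term_sat :: "(nat \<Rightarrow> bool) \<Rightarrow> dterm \<Rightarrow> bool" where
  "term_sat x T \<longleftrightarrow> (\<forall>l\<in>T. lit_sat x l)"

definition eval_dnf :: "dnf \<Rightarrow> (nat \<Rightarrow> bool) \<Rightarrow> bool" where
  "eval_dnf f x \<longleftrightarrow> (\<exists>T\<in>f. term_sat x T)"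

definition dnf_le :: "dnf \<Rightarrow> nat \<Rightarrow> dnf" where
  "dnf_le g L = {T\<in>g. card T \<le> L}"

definition dnf_gt :: "dnf \<Rightarrow> nat \<Rightarrow> dnf" where
  "dnf_gt g L = {T\<in>g. card T > L}"

definition sat_terms :: "dnf \<Rightarrow> (nat \<Rightarrow> bool) \<Rightarrow> dterm set" where
  "sat_terms f x = {T\<in>f. term_sat x T}"

definition protected :: "dnf \<Rightarrow> (nat \<Rightarrow> bool) \<Rightarrow> nat set" where
  "protected f y = {Min (fst ` {l\<in>T. \<not> lit_sat y l}) | T. T \<in> f \<and> \<not> term_sat y T}"

definition unanimous :: "dterm set \<Rightarrow> nat set" where
  "unanimous \<T> = {i. (\<forall>T\<in>\<T>. (i, True) \<in> T) \<or> (\<forall>T\<in>\<T>. (i, False) \<in> T)}"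

definition flip :: "(nat \<Rightarrow> bool) \<Rightarrow> nat \<Rightarrow> (nat \<Rightarrow> bool)" where
  "flip x j = x(j := \<not> x j)"

fun sweep :: "dnf \<Rightarrow> (nat \<Rightarrow> nat) \<Rightarrow> (nat \<Rightarrow> bool) \<Rightarrow> nat \<Rightarrow> (nat \<Rightarrow> bool)" where
  "sweep f \<pi> y 0 = y"
| "sweep f \<pi> y (Suc t) =
     (let z = sweep f \<pi> y t in
      if eval_dnf f (flip z (\<pi> t)) then flip z (\<pi> t) else z)"

end

theory Submission
  imports Defs
begin

(* The protected set certifies every term that y falsifies: each such term has a falsified
   literal on P(y), so an assignment agreeing with y on P(y) satisfies only terms that y
   satisfies. Let z be the sweep state. A unanimous index j of the terms satisfied by z appears
   in each of them with the value z j, whereas every term satisfied by z with j flipped must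
   contain the literal of the opposite value. If j is not protected, both z and its flip agree
   with y on P(y), so y would satisfy a term with each of the two literals on j. *)

lemma term_sat_if_agree_on_protected:
  assumes "T \<in> f" "finite T" "\<forall>a\<in>protected f y. x a = y a" "term_sat x T"
  shows "term_sat y T"
proof (rule ccontr)
  assume unsat: "\<not> term_sat y T"
  define A where "A = fst ` {l\<in>T. \<not> lit_sat y l}"
  have "A \<noteq> {}" "finite A"
    using unsat \<open>finite T\<close> unfolding A_def term_sat_def by auto
  then obtain l where l: "l \<in> T" "\<not> lit_sat y l" "fst l = Min A"
    using Min_in unfolding A_def by fastforce
  have "Min A \<in> protected f y"
    unfolding protected_def A_def using \<open>T \<in> f\<close> unsat by blast
  with assms(3,4) l show False
    unfolding term_sat_def lit_sat_def by auto
qed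

lemma eval_dnf_sweep: "eval_dnf f y \<Longrightarrow> eval_dnf f (sweep f \<pi> y t)"
  by (induction t) (auto simp: Let_def)

lemma unanimous_sat_terms_lit:
  assumes "j \<in> unanimous (sat_terms f x)" "T \<in> sat_terms f x"
  shows "(j, x j) \<in> T"
proof -
  obtain b where "(j, b) \<in> T"
    using assms unfolding unanimous_def by blast
  moreover have "term_sat x T"
    using assms(2) unfolding sat_terms_def by simp
  ultimately show ?thesis
    unfolding term_sat_def lit_sat_def by fastforce
qed

lemma flip_sat_term_lit:
  assumes "term_sat (flip x j) T" "\<not> term_sat x T"
  shows "(j, \<not> x j) \<in> T"
proof -
  obtain l where "l \<in> T" "\<not> lit_sat x l" "lit_sat (flip x j) l"
    using assms unfolding term_sat_def by blast
  then have "l = (j, \<not> x j)"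
    unfolding lit_sat_def flip_def by (cases l) (auto split: if_splits)
  with \<open>l \<in> T\<close> show ?thesis by simp
qed

lemma unanimous_flip_sat_term_lit:
  assumes "j \<in> unanimous (sat_terms f x)" "T \<in> f" "term_sat (flip x j) T"
  shows "(j, \<not> x j) \<in> T"
proof (cases "term_sat x T")
  case True
  with assms have "(j, x j) \<in> T"
    using unanimous_sat_terms_lit unfolding sat_terms_def by blast
  with assms(3) show ?thesis
    unfolding term_sat_def lit_sat_def flip_def by auto
next
  case False
  with assms(3) show ?thesis by (rule flip_sat_term_lit)
qed

(* Only f(y) = 1 and the agreement on P(y) are used. *)
theorem lemma4p10:
  fixes f :: dnf and n k i :: nat and y :: "nat \<Rightarrow> bool" and \<pi> :: "nat \<Rightarrow> nat"
  assumes fin_f: "finite f"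
    and fin_terms: "\<forall>T\<in>f. finite T"
    and vars: "\<forall>T\<in>f. \<forall>l\<in>T. fst l < n"
    and k_def: "card f = k"
    and y_gt: "eval_dnf (dnf_gt f (1000 * k)) y"
    and y_le: "\<not> eval_dnf (dnf_le f (1000 * k)) y"
    and perm: "bij_betw \<pi> {..<n} {..<n}"
    and i_le: "i \<le> n"
    and agree: "\<forall>a\<in>protected f y. sweep f \<pi> y i a = y a"
  shows "\<forall>j \<in> unanimous (sat_terms f (sweep f \<pi> y i)) - protected f y.
           \<not> eval_dnf f (flip (sweep f \<pi> y i) j)"
proof (intro ballI notI)
  fix j
  define z where "z = sweep f \<pi> y i"
  assume "j \<in> unanimous (sat_terms f (sweep f \<pi> y i)) - protected f y"
  then have j_unan: "j \<in> unanimous (sat_terms f z)" and j_unprot: "j \<notin> protected f y"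
    unfolding z_def by auto
  assume "eval_dnf f (flip (sweep f \<pi> y i) j)"
  then obtain T where T: "T \<in> f" "term_sat (flip z j) T"
    unfolding z_def eval_dnf_def by blast
  have "eval_dnf f y"
    using y_gt unfolding eval_dnf_def dnf_gt_def by auto
  then obtain S where S: "S \<in> sat_terms f z"
    using eval_dnf_sweep unfolding z_def eval_dnf_def sat_terms_def by blast
  have "term_sat y S"
    using term_sat_if_agree_on_protected[of S f y z] S fin_terms agree
    unfolding z_def sat_terms_def by auto
  moreover have "(j, z j) \<in> S"
    using unanimous_sat_terms_lit[OF j_unan S] .
  moreover have "term_sat y T"
    using term_sat_if_agree_on_protected[OF T(1) _ _ T(2)] fin_terms T(1) agree j_unprot
    unfolding z_def flip_def by auto
  moreover have "(j, \<not> z j) \<in> T"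
    using unanimous_flip_sat_term_lit[OF j_unan T] .
  ultimately show False
    unfolding term_sat_def lit_sat_def by fastforce
qed

end
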